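(* Let $U$ be a Hilbert space, $H: U\rightrightarrows U$, and for each $i\in\mathbb{N}$ let $W_{i+1}, M_{i+1}, Z_{i+1}, P_{i+1}\in\mathcal{L}(U;U)$ with $Z_{i+1}M_{i+1}$ self-adjoint, positive definite and invertible, and with $Z_{i+2}M_{i+2}\ge Z_{i+1}P_{i+1}$. Let $(u^i)_{i\in\mathbb{N}}$ satisfy $0\in W_{i+1}H(u^{i+1}) + M_{i+1}(u^{i+1}-u^i)$ for all $i$. Let $\delta\in[0,1]$ and $N_{i+1}:=\delta W_{i+1}^*Z_{i+1}^*(Z_{i+1}M_{i+1})^{-1}Z_{i+1}W_{i+1}$. Suppose $H$ is $(Z_{i+1}P_{i+1}, N_{i+1}, Z_{i+2}M_{i+2})$-partially subregular at some $(\hat u,0)$ with $\hat u\in H^{-1}(0)$, in a neighbourhood $\mathcal{U}$ containing $\{u^j\}_{j=0}^\infty$. Then \[ \delta\|u^{i+1}-u^i\|^2_{Z_{i+1}M_{i+1}} + \operatorname{dist}^2_{Z_{i+2}M_{i+2}-Z_{i+1}P_{i+1}}(u^{i+1},H^{-1}(0)) \ge \operatorname{dist}^2_{Z_{i+2}M_{i+2}}(u^{i+1},H^{-1}(0)). \]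
   Context: For $T\in\mathcal{L}(U;U)$: $\|x\|_T^2:=\langle Tx,x\rangle$, $\operatorname{dist}_T^2(z,A):=\inf_{u\in A}\|z-u\|_T^2$ (with $\inf\emptyset=+\infty$); $T\ge S$ means $T-S$ positive semidefinite. Definition (partial subregularity): for Hilbert spaces $U,W$, $M,P\in\mathcal{L}(U;U)$ and $N\in\mathcal{L}(W;W)$ with $N\ge0$, $M\ge0$, $M\ge P$, a map $T:U\rightrightarrows W$ is $(P,N,M)$-partially subregular at $(\hat u,\hat w)\in\operatorname{graph}T$ if there is a neighbourhood $\mathcal{U}\ni\hat u$ with \[ \operatorname{dist}^2_N(\hat w, T(u)) + \operatorname{dist}^2_{M-P}(u, T^{-1}(\hat w)) \ge \operatorname{dist}^2_M(u,T^{-1}(\hat w)) \quad (u\in\mathcal{U}). \] *)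

theory Defs
  imports "HOL-Analysis.Analysis"
begin

text \<open>Real Hilbert space: type class real_inner + complete_space.
  Operators in L(U;U): functions with bounded_linear.
  Set-valued maps U =>=> W: functions into sets.\<close>

definition sqnorm_op :: "('a::real_inner \<Rightarrow> 'a) \<Rightarrow> 'a \<Rightarrow> real" where
  "sqnorm_op T x = T x \<bullet> x"

definition distsq_op :: "('a::real_inner \<Rightarrow> 'a) \<Rightarrow> 'a \<Rightarrow> 'a set \<Rightarrow> ereal" where
  "distsq_op T z A = (INF u\<in>A. ereal (sqnorm_op T (z - u)))"

definition psd_le :: "('a::real_inner \<Rightarrow> 'a) \<Rightarrow> ('a \<Rightarrow> 'a) \<Rightarrow> bool" where
  "psd_le S T \<longleftrightarrow> (\<forall>x. 0 \<le> sqnorm_op (\<lambda>y. T y - S y) x)"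

definition self_adjoint_op :: "('a::real_inner \<Rightarrow> 'a) \<Rightarrow> bool" where
  "self_adjoint_op T \<longleftrightarrow> (\<forall>x y. T x \<bullet> y = x \<bullet> T y)"

definition pos_def_op :: "('a::real_inner \<Rightarrow> 'a) \<Rightarrow> bool" where
  "pos_def_op T \<longleftrightarrow> (\<forall>x. x \<noteq> 0 \<longrightarrow> 0 < sqnorm_op T x)"

definition invertible_op :: "('a::real_normed_vector \<Rightarrow> 'a) \<Rightarrow> bool" where
  "invertible_op T \<longleftrightarrow> bounded_linear T \<and> bij T \<and> bounded_linear (inv T)"

definition inv_setmap :: "('a \<Rightarrow> 'b set) \<Rightarrow> 'b \<Rightarrow> 'a set" where
  "inv_setmap T w = {u. w \<in> T u}"

definition partially_subregular_on ::
  "('a::real_inner \<Rightarrow> 'a) \<Rightarrow> ('b::real_inner \<Rightarrow> 'b) \<Rightarrow> ('a \<Rightarrow> 'a) \<Rightarrow>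
   ('a \<Rightarrow> 'b set) \<Rightarrow> 'a \<Rightarrow> 'b \<Rightarrow> 'a set \<Rightarrow> bool" where
  "partially_subregular_on P N M T uh wh Nb \<longleftrightarrow>
     bounded_linear P \<and> bounded_linear N \<and> bounded_linear M \<and>
     psd_le (\<lambda>_. 0) N \<and> psd_le (\<lambda>_. 0) M \<and> psd_le P M \<and>
     wh \<in> T uh \<and> open Nb \<and> uh \<in> Nb \<and>
     (\<forall>u\<in>Nb. distsq_op N wh (T u) + distsq_op (\<lambda>x. M x - P x) u (inv_setmap T wh)
                \<ge> distsq_op M u (inv_setmap T wh))"

definition partially_subregular ::
  "('a::real_inner \<Rightarrow> 'a) \<Rightarrow> ('b::real_inner \<Rightarrow> 'b) \<Rightarrow> ('a \<Rightarrow> 'a) \<Rightarrow>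
   ('a \<Rightarrow> 'b set) \<Rightarrow> 'a \<Rightarrow> 'b \<Rightarrow> bool" where
  "partially_subregular P N M T uh wh \<longleftrightarrow> (\<exists>Nb. partially_subregular_on P N M T uh wh Nb)"

end

(*
  The iteration supplies h in H(u^{i+1}) with W_{i+1} h = -M_{i+1}(u^{i+1} - u^i).  Inserting this
  residual into the weight N_{i+1} collapses it, since (Z M)^{-1} Z W h = -(u^{i+1} - u^i), and one
  gets ||0 - h||^2_{N_{i+1}} = delta ||u^{i+1} - u^i||^2_{Z M}.  This bounds dist^2_{N_{i+1}}(0, H(u^{i+1})),
  and partial subregularity at u^{i+1} gives the claim.  The adjoints in N_{i+1} are Hilbert-space
  adjoints, which requires the Riesz representation theorem, proved here via the minimal-norm point
  of a closed convex set.
*)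
theory Submission
  imports Defs
begin

lemma parallelogram_law:
  fixes x y :: "'a::real_inner"
  shows "(norm (x + y))\<^sup>2 + (norm (x - y))\<^sup>2 = 2 * (norm x)\<^sup>2 + 2 * (norm y)\<^sup>2"
  by (simp add: power2_norm_eq_inner inner_add inner_diff inner_commute)

lemma Cauchy_if_dist_sq_le:
  fixes s :: "nat \<Rightarrow> 'a::metric_space"
  assumes e: "e \<longlonglongrightarrow> 0" and le: "\<And>m n. (dist (s m) (s n))\<^sup>2 \<le> e m + e n"
  shows "Cauchy s"
proof (rule metric_CauchyI)
  fix \<epsilon> :: real assume "\<epsilon> > 0"
  then have "\<forall>\<^sub>F n in sequentially. e n < \<epsilon>\<^sup>2 / 2"
    using e by (intro order_tendstoD) auto
  then obtain K where K: "\<And>n. n \<ge> K \<Longrightarrow> e n < \<epsilon>\<^sup>2 / 2"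
    by (auto simp: eventually_sequentially)
  have "dist (s m) (s n) < \<epsilon>" if "m \<ge> K" "n \<ge> K" for m n
  proof -
    have "(dist (s m) (s n))\<^sup>2 < \<epsilon>\<^sup>2"
      using le[of m n] K[OF that(1)] K[OF that(2)] by linarith
    then show ?thesis using \<open>\<epsilon> > 0\<close> by (simp add: power_less_imp_less_base)
  qed
  then show "\<exists>K. \<forall>m\<ge>K. \<forall>n\<ge>K. dist (s m) (s n) < \<epsilon>" by blast
qed

lemma convex_norm_diff_sq_le:
  fixes x y :: "'a::real_inner"
  assumes "convex S" "x \<in> S" "y \<in> S" and lower: "\<And>z. z \<in> S \<Longrightarrow> d \<le> norm z" and "0 \<le> d"
  shows "(norm (x - y))\<^sup>2 \<le> 2 * ((norm x)\<^sup>2 - d\<^sup>2) + 2 * ((norm y)\<^sup>2 - d\<^sup>2)"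
proof -
  have "(1/2) *\<^sub>R x + (1/2) *\<^sub>R y \<in> S"
    using assms(1-3) by (rule convexD) auto
  then have "d\<^sup>2 \<le> (norm ((1/2) *\<^sub>R (x + y)))\<^sup>2"
    using lower \<open>0 \<le> d\<close> by (intro power_mono) (auto simp: scaleR_add_right)
  then have "4 * d\<^sup>2 \<le> (norm (x + y))\<^sup>2"
    by (simp add: power_divide)
  then show ?thesis using parallelogram_law[of x y] by (simp add: algebra_simps)
qed

lemma closed_convex_has_min_norm:
  fixes S :: "'a::{real_inner, complete_space} set"
  assumes "closed S" "convex S" "S \<noteq> {}"
  obtains x0 where "x0 \<in> S" "\<And>x. x \<in> S \<Longrightarrow> norm x0 \<le> norm x"
proof -
  define d where "d = Inf (norm ` S)"
  have bdd: "bdd_below (norm ` S)" by (rule bdd_belowI[of _ 0]) auto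
  have lower: "d \<le> norm x" if "x \<in> S" for x
    unfolding d_def using bdd that by (simp add: cInf_lower)
  have "0 \<le> d" unfolding d_def using \<open>S \<noteq> {}\<close> by (intro cInf_greatest) auto
  have "\<exists>x\<in>S. norm x < sqrt (d\<^sup>2 + 1 / real (Suc n))" for n
  proof -
    have "Inf (norm ` S) < sqrt (d\<^sup>2 + 1 / real (Suc n))"
      using \<open>0 \<le> d\<close> by (simp add: d_def[symmetric] real_less_rsqrt)
    then have "\<exists>r\<in>norm ` S. r < sqrt (d\<^sup>2 + 1 / real (Suc n))"
      using \<open>S \<noteq> {}\<close> by (intro cInf_lessD) auto
    then show ?thesis by blast
  qed
  then obtain s where s: "\<And>n. s n \<in> S" "\<And>n. norm (s n) < sqrt (d\<^sup>2 + 1 / real (Suc n))"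
    by metis
  have s_sq: "(norm (s n))\<^sup>2 < d\<^sup>2 + 1 / real (Suc n)" for n
  proof -
    have "(norm (s n))\<^sup>2 < (sqrt (d\<^sup>2 + 1 / real (Suc n)))\<^sup>2"
      using s(2)[of n] by (intro power_strict_mono) auto
    then show ?thesis by simp
  qed
  have "Cauchy s"
  proof (rule Cauchy_if_dist_sq_le)
    show "(\<lambda>n. 2 / real (Suc n)) \<longlonglongrightarrow> 0"
      using LIMSEQ_Suc[OF lim_const_over_n[of 2]] by simp
    show "(dist (s m) (s n))\<^sup>2 \<le> 2 / real (Suc m) + 2 / real (Suc n)" for m n
      using convex_norm_diff_sq_le[OF \<open>convex S\<close> s(1) s(1) lower \<open>0 \<le> d\<close>, of m n]
        s_sq[of m] s_sq[of n] by (simp add: dist_norm)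
  qed
  then obtain x0 where lim: "s \<longlonglongrightarrow> x0" using convergent_eq_Cauchy by blast
  have "x0 \<in> S" using closed_sequentially[OF \<open>closed S\<close> _ lim] s(1) by blast
  have "(\<lambda>n. (norm (s n))\<^sup>2) \<longlonglongrightarrow> (norm x0)\<^sup>2" using lim by (intro tendsto_intros)
  moreover have "(\<lambda>n. d\<^sup>2 + 1 / real (Suc n)) \<longlonglongrightarrow> d\<^sup>2"
    using tendsto_add[OF tendsto_const LIMSEQ_Suc[OF lim_const_over_n[of 1]], of "d\<^sup>2"] by simp
  ultimately have "(norm x0)\<^sup>2 \<le> d\<^sup>2"
    by (rule LIMSEQ_le) (use s_sq less_imp_le in auto)
  then have "norm x0 \<le> d" using \<open>0 \<le> d\<close> by (simp add: power2_le_iff_abs_le)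
  then show ?thesis using that \<open>x0 \<in> S\<close> lower by force
qed

lemma inner_eq_0_if_norm_minimal:
  fixes x k :: "'a::real_inner"
  assumes min: "\<And>t::real. norm x \<le> norm (x + t *\<^sub>R k)"
  shows "x \<bullet> k = 0"
proof (cases "k = 0")
  case False
  then have "0 < k \<bullet> k" by simp
  define t where "t = - (x \<bullet> k) / (k \<bullet> k)"
  have "(norm x)\<^sup>2 \<le> (norm (x + t *\<^sub>R k))\<^sup>2"
    using min by (simp add: power_mono)
  also have "\<dots> = (norm x)\<^sup>2 - (x \<bullet> k)\<^sup>2 / (k \<bullet> k)"
    using \<open>0 < k \<bullet> k\<close> unfolding t_def power2_norm_eq_inner
    by (simp add: inner_add inner_diff inner_commute field_simps power2_eq_square)
  finally have "(x \<bullet> k)\<^sup>2 / (k \<bullet> k) \<le> 0" by simp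
  then show ?thesis
    using \<open>0 < k \<bullet> k\<close> by (simp add: divide_le_0_iff)
qed simp

lemma riesz_representation:
  fixes \<phi> :: "'a::{real_inner, complete_space} \<Rightarrow> real"
  assumes "bounded_linear \<phi>"
  obtains y where "\<And>x. \<phi> x = x \<bullet> y"
proof (cases "\<forall>x. \<phi> x = 0")
  case True
  then show ?thesis using that[of 0] by simp
next
  case False
  interpret bounded_linear \<phi> by fact
  define S where "S = {x. \<phi> x = 1}"
  from False obtain b where "\<phi> b \<noteq> 0" by auto
  then have "(1 / \<phi> b) *\<^sub>R b \<in> S" by (simp add: S_def scale)
  moreover have "closed S"
    unfolding S_def by (intro closed_Collect_eq continuous_on_const linear_continuous_on assms)
  moreover have "convex S"
    unfolding S_def using convex_linear_vimage[OF linear_axioms convex_singleton[of 1]]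
    by (simp add: vimage_def)
  ultimately obtain x0 where "x0 \<in> S" and x0_min: "\<And>x. x \<in> S \<Longrightarrow> norm x0 \<le> norm x"
    using closed_convex_has_min_norm by blast
  then have "\<phi> x0 = 1" by (simp add: S_def)
  have x0_orth: "x0 \<bullet> k = 0" if "\<phi> k = 0" for k
    using that \<open>\<phi> x0 = 1\<close>
    by (intro inner_eq_0_if_norm_minimal x0_min) (simp add: S_def add scale)
  have "x0 \<noteq> 0" using \<open>\<phi> x0 = 1\<close> zero by auto
  have "\<phi> x = x \<bullet> ((1 / (x0 \<bullet> x0)) *\<^sub>R x0)" for x
  proof -
    have "x0 \<bullet> (x - \<phi> x *\<^sub>R x0) = 0"
      using \<open>\<phi> x0 = 1\<close> by (intro x0_orth) (simp add: diff scale)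
    then show ?thesis
      using \<open>x0 \<noteq> 0\<close> by (simp add: inner_diff_right inner_commute field_simps)
  qed
  then show ?thesis by (rule that)
qed

text \<open>The library's \<open>adjoint\<close> is defined by Hilbert choice, and \<open>adjoint_works\<close> only covers
  euclidean spaces; the Riesz representation makes the choice meaningful on any complete domain.\<close>

lemma adjoint_works_complete:
  fixes f :: "'a::{real_inner, complete_space} \<Rightarrow> 'b::real_inner"
  assumes "bounded_linear f"
  shows "x \<bullet> adjoint f y = f x \<bullet> y"
proof -
  have "\<exists>w. \<forall>x. f x \<bullet> y = x \<bullet> w" for y
    using riesz_representation[OF bounded_linear_inner_left_comp[OF assms]] by metis
  then have "\<exists>f'. \<forall>x y. f x \<bullet> y = x \<bullet> f' y" by metis
  then have "\<forall>x y. f x \<bullet> y = x \<bullet> adjoint f y"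
    unfolding adjoint_def by (rule someI_ex)
  then show ?thesis by simp
qed

lemma sqnorm_op_preconditioned_residual:
  fixes W :: "'b::{real_inner, complete_space} \<Rightarrow> 'a::{real_inner, complete_space}"
    and Z M :: "'a \<Rightarrow> 'a"
  assumes "bounded_linear W" "bounded_linear Z" "inj (Z \<circ> M)" and "W h = M d"
  shows "sqnorm_op (\<lambda>x. \<delta> *\<^sub>R (adjoint W \<circ> adjoint Z \<circ> inv (Z \<circ> M) \<circ> Z \<circ> W) x) h
           = \<delta> * sqnorm_op (Z \<circ> M) d"
proof -
  have "inv (Z \<circ> M) (Z (W h)) = d"
    using inv_f_f[OF \<open>inj (Z \<circ> M)\<close>, of d] \<open>W h = M d\<close> by simp
  then have "sqnorm_op (\<lambda>x. \<delta> *\<^sub>R (adjoint W \<circ> adjoint Z \<circ> inv (Z \<circ> M) \<circ> Z \<circ> W) x) h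
               = \<delta> * (adjoint W (adjoint Z d) \<bullet> h)"
    by (simp add: sqnorm_op_def)
  also have "\<dots> = \<delta> * (d \<bullet> Z (M d))"
    using adjoint_works_complete[OF \<open>bounded_linear W\<close>, of h "adjoint Z d"]
      adjoint_works_complete[OF \<open>bounded_linear Z\<close>, of "M d" d] \<open>W h = M d\<close>
    by (simp add: inner_commute)
  also have "\<dots> = \<delta> * sqnorm_op (Z \<circ> M) d"
    by (simp add: sqnorm_op_def inner_commute)
  finally show ?thesis .
qed

lemma partially_subregular_on_residual_bound:
  assumes "partially_subregular_on P N M T uh wh Nb" "v \<in> Nb" "h \<in> T v"
    and "sqnorm_op N (wh - h) \<le> c"
  shows "ereal c + distsq_op (\<lambda>x. M x - P x) v (inv_setmap T wh) \<ge> distsq_op M v (inv_setmap T wh)"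
proof -
  have "distsq_op N wh (T v) \<le> ereal c"
    unfolding distsq_op_def using assms(3,4) by (meson INF_lower2 ereal_less_eq(3))
  moreover have "distsq_op N wh (T v) + distsq_op (\<lambda>x. M x - P x) v (inv_setmap T wh)
                   \<ge> distsq_op M v (inv_setmap T wh)"
    using assms(1,2) unfolding partially_subregular_on_def by blast
  ultimately show ?thesis by (meson add_right_mono order_trans)
qed

theorem proposition3p14:
  fixes H :: "'a::{real_inner, complete_space} \<Rightarrow> 'a set"
    and W M Z P :: "nat \<Rightarrow> 'a \<Rightarrow> 'a"
    and u :: "nat \<Rightarrow> 'a"
    and \<delta> :: real and uh :: 'a
  assumes ops: "\<And>i. bounded_linear (W (i+1)) \<and> bounded_linear (M (i+1)) \<and>
                    bounded_linear (Z (i+1)) \<and> bounded_linear (P (i+1))"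
    and ZM_sa: "\<And>i. self_adjoint_op (Z (i+1) \<circ> M (i+1))"
    and ZM_pd: "\<And>i. pos_def_op (Z (i+1) \<circ> M (i+1))"
    and ZM_inv: "\<And>i. invertible_op (Z (i+1) \<circ> M (i+1))"
    and ZM_ge: "\<And>i. psd_le (Z (i+1) \<circ> P (i+1)) (Z (i+2) \<circ> M (i+2))"
    and iter: "\<And>i. 0 \<in> {W (i+1) h + M (i+1) (u (i+1) - u i) | h. h \<in> H (u (i+1))}"
    and \<delta>: "0 \<le> \<delta>" "\<delta> \<le> 1"
    and N_def: "\<And>i. N (i+1) = (\<lambda>x. \<delta> *\<^sub>R (adjoint (W (i+1)) \<circ> adjoint (Z (i+1))
                    \<circ> inv (Z (i+1) \<circ> M (i+1)) \<circ> Z (i+1) \<circ> W (i+1)) x)"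
    and uh: "uh \<in> inv_setmap H 0"
    and subreg: "\<And>i. \<exists>Nb. range u \<subseteq> Nb \<and>
                    partially_subregular_on (Z (i+1) \<circ> P (i+1)) (N (i+1)) (Z (i+2) \<circ> M (i+2))
                      H uh 0 Nb"
  shows "\<forall>i. ereal (\<delta> * sqnorm_op (Z (i+1) \<circ> M (i+1)) (u (i+1) - u i))
            + distsq_op (\<lambda>x. (Z (i+2) \<circ> M (i+2)) x - (Z (i+1) \<circ> P (i+1)) x) (u (i+1)) (inv_setmap H 0)
          \<ge> distsq_op (Z (i+2) \<circ> M (i+2)) (u (i+1)) (inv_setmap H 0)"
proof
  fix i
  obtain Nb where "range u \<subseteq> Nb"
    and subreg_i: "partially_subregular_on (Z (i+1) \<circ> P (i+1)) (N (i+1)) (Z (i+2) \<circ> M (i+2)) H uh 0 Nb"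
    using subreg by blast
  obtain h where "h \<in> H (u (i+1))" and "W (i+1) h + M (i+1) (u (i+1) - u i) = 0"
    using iter[of i] by auto
  then have "W (i+1) (- h) = M (i+1) (u (i+1) - u i)"
    using ops[of i] by (simp add: linear_neg bounded_linear.linear add_eq_0_iff)
  moreover have "inj (Z (i+1) \<circ> M (i+1))"
    using ZM_inv[of i] by (simp add: invertible_op_def bij_is_inj)
  ultimately have residual: "sqnorm_op (N (i+1)) (0 - h) = \<delta> * sqnorm_op (Z (i+1) \<circ> M (i+1)) (u (i+1) - u i)"
    unfolding N_def diff_zero by (intro sqnorm_op_preconditioned_residual) (use ops[of i] in auto)
  then show "ereal (\<delta> * sqnorm_op (Z (i+1) \<circ> M (i+1)) (u (i+1) - u i))
      + distsq_op (\<lambda>x. (Z (i+2) \<circ> M (i+2)) x - (Z (i+1) \<circ> P (i+1)) x) (u (i+1)) (inv_setmap H 0)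
      \<ge> distsq_op (Z (i+2) \<circ> M (i+2)) (u (i+1)) (inv_setmap H 0)"
    using \<open>range u \<subseteq> Nb\<close> \<open>h \<in> H (u (i+1))\<close> residual
    by (intro partially_subregular_on_residual_bound[OF subreg_i]) auto
qed

end
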